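(* For every agent $i$ and every measurable $q_i:[0,1]\to[0,1]$, letting $r_i=\int_0^1q_i(x)\,dx$ and $H_i(t)=F_{i,0}(2\kappa t)$, \[ \int_0^1 q_i(x)\,F_{i,x}^{-1}(1-q_i(x))\,dx\ \le\ r_i\,F_{i,0}^{-1}(1-r_i)\ =\ 2\kappa\, r_i\,H_i^{-1}(1-r_i). \]
   Context: Agent $i$ has a valuation $v_i:[0,1]\to\mathbb{R}_{\ge0}$ drawn from a distribution $\mathcal F_i$; almost surely $v_i$ is non-decreasing, concave and differentiable on $[0,1]$ (one-sided derivatives at endpoints); $\kappa\ge1$ is a fixed constant. For $x\in[0,1]$, $F_{i,x}$ is the cdf of $v_i'(x)$ for $v_i\sim\mathcal F_i$, and $F^{-1}(s)=\inf\{t:F(t)\ge s\}$ denotes the quantile function of a cdf $F$ (convention $0\cdot F^{-1}(1)=0$). Regularity assumption: $q\mapsto q\,F_{i,0}^{-1}(1-q)$ is concave on $[0,1]$. *)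

theory Defs
  imports "HOL-Analysis.Analysis" "HOL-Probability.Probability"
begin

text \<open>Since the random variables here are nonnegative,
  F t = 0 for t < 0, so restricting to t >= 0 changes nothing for s > 0 and
  fixes F^{-1}(0) = 0 (instead of -infinity).\<close>
definition quantile :: "(real \<Rightarrow> real) \<Rightarrow> real \<Rightarrow> real" where
  "quantile F s = Inf {t. 0 \<le> t \<and> s \<le> F t}"

definition qtimes :: "real \<Rightarrow> (real \<Rightarrow> real) \<Rightarrow> real" where
  "qtimes q F = (if q = 0 then 0 else q * quantile F (1 - q))"

definition deriv_cdf :: "'a measure \<Rightarrow> ('a \<Rightarrow> real \<Rightarrow> real) \<Rightarrow> real \<Rightarrow> real \<Rightarrow> real" where
  "deriv_cdf M D x t = measure M {\<omega> \<in> space M. D \<omega> x \<le> t}"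

end

theory Submission
  imports Defs
begin

(* Concavity of the valuations gives v'(x) \<le> v'(0), so the cdf F_x dominates F_0 and
   F_x^{-1}(1 - s) \<le> F_0^{-1}(1 - s). The integrand is therefore bounded by g(q(x)) with
   g(s) = s F_0^{-1}(1 - s), which is concave by the regularity assumption, and Jensen's
   inequality for the uniform distribution on [0,1] bounds the integral by g(r). The identity
   with H is the rescaling H^{-1} = F_0^{-1} / (2\<kappa>) of quantiles. *)

lemma concave_on_Icc_below_tangent:
  fixes f :: "real \<Rightarrow> real"
  assumes cv: "concave_on {a..b} f" and c: "c \<in> {a..b}" and x: "x \<in> {a..b}"
    and deriv: "(f has_real_derivative D) (at c within {a..b})"
  shows "f x - f c \<le> D * (x - c)"
proof -
  have slopes: "((\<lambda>y. (f y - f c) / (y - c)) \<longlongrightarrow> D) (at c within S)" if "S \<subseteq> {a..b}" for S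
    using deriv that by (auto simp: has_field_derivative_iff intro: tendsto_mono at_le)
  have cv_sub: "concave_on S f" if "S \<subseteq> {a..b}" "convex S" for S
    using cv that unfolding concave_on_def by (rule convex_on_subset)
  show ?thesis
  proof (cases x c rule: linorder_cases)
    case greater
    have "((\<lambda>y. (f y - f c) / (y - c)) \<longlongrightarrow> D) (at_right c)"
      using slopes[of "{c..x}"] c x greater by (simp add: at_within_Icc_at_right)
    moreover have "eventually (\<lambda>y. (f x - f c) / (x - c) \<le> (f y - f c) / (y - c)) (at_right c)"
      using eventually_at_right_real[OF greater]
    proof eventually_elim
      fix y assume y: "y \<in> {c<..<x}"
      have "(f x - f c) / (x - c) * (y - c) + f c \<le> f y"
        using concave_onD_Icc'[OF cv_sub, of c x y] c x y by auto
      thus "(f x - f c) / (x - c) \<le> (f y - f c) / (y - c)" using y by (simp add: field_simps)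
    qed
    ultimately have "(f x - f c) / (x - c) \<le> D" by (simp add: tendsto_lowerbound)
    thus ?thesis using greater by (simp add: field_simps)
  next
    case less
    have "((\<lambda>y. (f y - f c) / (y - c)) \<longlongrightarrow> D) (at_left c)"
      using slopes[of "{x..c}"] c x less by (simp add: at_within_Icc_at_left)
    moreover have "eventually (\<lambda>y. (f y - f c) / (y - c) \<le> (f x - f c) / (x - c)) (at_left c)"
      using eventually_at_left_real[OF less]
    proof eventually_elim
      fix y assume y: "y \<in> {x<..<c}"
      have "(f x - f c) / (c - x) * (c - y) + f c \<le> f y"
        using concave_onD_Icc''[OF cv_sub, of x c y] c x y by auto
      thus "(f y - f c) / (y - c) \<le> (f x - f c) / (x - c)" using y by (simp add: field_simps)
    qed
    ultimately have "D \<le> (f x - f c) / (x - c)" by (simp add: tendsto_upperbound)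
    thus ?thesis using less by (simp add: field_simps)
  qed simp
qed

lemma concave_on_Icc_deriv_antimono:
  fixes f :: "real \<Rightarrow> real"
  assumes cv: "concave_on {a..b} f" and x: "x \<in> {a..b}" and y: "y \<in> {a..b}" and "x < y"
    and f'x: "(f has_real_derivative f'x) (at x within {a..b})"
    and f'y: "(f has_real_derivative f'y) (at y within {a..b})"
  shows "f'y \<le> f'x"
proof -
  have "f'y * (y - x) \<le> f y - f x"
    using concave_on_Icc_below_tangent[OF cv y x f'y] by (simp add: algebra_simps)
  also have "\<dots> \<le> f'x * (y - x)"
    using concave_on_Icc_below_tangent[OF cv x y f'x] .
  finally show ?thesis using \<open>x < y\<close> by simp
qed

lemma concave_on_Icc_supporting_line:
  fixes g :: "real \<Rightarrow> real"
  assumes "concave_on {a..b} g" and "r \<in> {a<..<b}"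
  obtains c where "\<And>y. y \<in> {a..b} \<Longrightarrow> g y \<le> g r + c * (y - r)"
proof -
  define c where "c = - (INF t \<in> {r<..} \<inter> {a..b}. (g t - g r) / (r - t))"
  have "g y \<le> g r + c * (y - r)" if "y \<in> {a..b}" for y
    using convex_le_Inf_differential[of "{a..b}" "\<lambda>x. - g x" r y] assms that
    by (simp add: concave_on_def c_def)
  thus ?thesis by (rule that)
qed

lemma (in prob_space) AE_eq_of_expectation_eq_lower_bound:
  fixes X :: "'a \<Rightarrow> real"
  assumes "integrable M X" and "\<And>\<omega>. \<omega> \<in> space M \<Longrightarrow> a \<le> X \<omega>" and "expectation X = a"
  shows "AE \<omega> in M. X \<omega> = a"
proof -
  have "expectation (\<lambda>\<omega>. X \<omega> - a) = 0"
    using assms by (simp add: prob_space)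
  hence "AE \<omega> in M. X \<omega> - a = 0"
    using assms by (subst (asm) integral_nonneg_eq_0_iff_AE) auto
  thus ?thesis by simp
qed

lemma (in prob_space) jensens_inequality_concave_Icc:
  fixes g :: "real \<Rightarrow> real"
  assumes g: "concave_on {a..b} g" "\<And>y. y \<in> {a..b} \<Longrightarrow> 0 \<le> g y"
    and X: "integrable M X" "\<And>\<omega>. \<omega> \<in> space M \<Longrightarrow> X \<omega> \<in> {a..b}"
  shows "(\<integral>\<^sup>+\<omega>. ennreal (g (X \<omega>)) \<partial>M) \<le> ennreal (g (expectation X))"
proof -
  define r where "r = expectation X"
  have const: "(\<integral>\<^sup>+\<omega>. ennreal (g (X \<omega>)) \<partial>M) = ennreal (g r)" if "AE \<omega> in M. X \<omega> = r"
  proof -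
    have "(\<integral>\<^sup>+\<omega>. ennreal (g (X \<omega>)) \<partial>M) = (\<integral>\<^sup>+\<omega>. ennreal (g r) \<partial>M)"
      using that by (intro nn_integral_cong_AE) auto
    thus ?thesis by (simp add: emeasure_space_1)
  qed
  have "a \<le> r" "r \<le> b"
    unfolding r_def using X by (auto intro!: integral_ge_const integral_le_const)
  \<comment> \<open>At an endpoint there may be no supporting line, but there X is almost surely constant.\<close>
  then consider "r = a" | "r = b" | "r \<in> {a<..<b}" by fastforce
  hence "(\<integral>\<^sup>+\<omega>. ennreal (g (X \<omega>)) \<partial>M) \<le> ennreal (g r)"
  proof cases
    case 1
    hence "AE \<omega> in M. X \<omega> = r"
      using AE_eq_of_expectation_eq_lower_bound[of X a] X by (auto simp: r_def)
    thus ?thesis by (simp add: const)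
  next
    case 2
    hence "AE \<omega> in M. - X \<omega> = - r"
      using AE_eq_of_expectation_eq_lower_bound[of "\<lambda>\<omega>. - X \<omega>" "- b"] X by (auto simp: r_def)
    thus ?thesis by (simp add: const)
  next
    case 3
    then obtain c where c: "\<And>y. y \<in> {a..b} \<Longrightarrow> g y \<le> g r + c * (y - r)"
      using concave_on_Icc_supporting_line[OF g(1)] by blast
    have "(\<integral>\<^sup>+\<omega>. ennreal (g (X \<omega>)) \<partial>M) \<le> (\<integral>\<^sup>+\<omega>. ennreal (g r + c * (X \<omega> - r)) \<partial>M)"
      using X(2) by (intro nn_integral_mono ennreal_leI c)
    also have "\<dots> = ennreal (expectation (\<lambda>\<omega>. g r + c * (X \<omega> - r)))"
      using X g(2) by (intro nn_integral_eq_integral AE_I2 order_trans[OF g(2) c]) auto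
    also have "expectation (\<lambda>\<omega>. g r + c * (X \<omega> - r)) = g r"
      using X by (simp add: r_def prob_space algebra_simps)
    finally show ?thesis .
  qed
  thus ?thesis by (simp add: r_def)
qed

lemma quantile_nonneg:
  assumes "\<exists>t\<ge>0. s \<le> F t"
  shows "0 \<le> quantile F s"
  unfolding quantile_def using assms by (intro cInf_greatest) auto

lemma quantile_antimono_cdf:
  assumes "\<exists>t\<ge>0. s \<le> F t" and "\<And>t. F t \<le> G t"
  shows "quantile G s \<le> quantile F s"
  unfolding quantile_def
  by (rule cInf_superset_mono) (use assms order_trans in \<open>auto intro: bdd_belowI[of _ 0]\<close>)

lemma quantile_rescale:
  assumes "\<exists>t\<ge>0. s \<le> F t" and k: "0 < k"
  shows "quantile F s = k * quantile (\<lambda>t. F (k * t)) s"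
proof -
  let ?B = "{t. 0 \<le> t \<and> s \<le> F (k * t)}"
  have image: "(*) k ` ?B = {t. 0 \<le> t \<and> s \<le> F t}"
  proof (intro equalityI subsetI)
    fix t assume "t \<in> {t. 0 \<le> t \<and> s \<le> F t}"
    thus "t \<in> (*) k ` ?B" using k by (intro image_eqI[of _ _ "t / k"]) auto
  qed (use k in auto)
  have "?B \<noteq> {}" using image assms(1) by auto
  hence "k * Inf ?B = Inf ((*) k ` ?B)"
    using k by (intro continuous_at_Inf_mono monoI continuous_intros bdd_belowI[of _ 0]) auto
  thus ?thesis unfolding quantile_def image by simp
qed

lemma qtimes_nonneg:
  assumes "\<forall>u<1. \<exists>t\<ge>0. u \<le> F t" and "0 \<le> s"
  shows "0 \<le> qtimes s F"
  using assms quantile_nonneg[of "1 - s" F] by (simp add: qtimes_def)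

lemma qtimes_antimono_cdf:
  assumes "\<forall>u<1. \<exists>t\<ge>0. u \<le> F t" and "\<And>t. F t \<le> G t" and "0 \<le> s"
  shows "qtimes s G \<le> qtimes s F"
  using assms quantile_antimono_cdf[of "1 - s" F G] by (simp add: qtimes_def mult_left_mono)

lemma qtimes_rescale:
  assumes "\<forall>u<1. \<exists>t\<ge>0. u \<le> F t" and "0 < k" and "0 \<le> s"
  shows "qtimes s F = k * qtimes s (\<lambda>t. F (k * t))"
  using assms quantile_rescale[of "1 - s" F k] by (simp add: qtimes_def)

lemma (in prob_space) deriv_cdf_exceeds_below_one:
  assumes "(\<lambda>\<omega>. D \<omega> x) \<in> borel_measurable M" and "s < 1"
  shows "\<exists>t\<ge>0. s \<le> deriv_cdf M D x t"
proof -
  let ?\<mu> = "distr M borel (\<lambda>\<omega>. D \<omega> x)"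
  interpret \<mu>: real_distribution ?\<mu> using assms(1) by simp
  have "deriv_cdf M D x = cdf ?\<mu>"
    using assms(1) by (auto simp: fun_eq_iff deriv_cdf_def cdf_def measure_distr vimage_def Int_def conj_commute)
  moreover from order_tendstoD(1)[OF \<mu>.cdf_lim_at_top_prob assms(2)]
  obtain t0 where "\<And>t. t0 \<le> t \<Longrightarrow> s < cdf ?\<mu> t" by (auto simp: eventually_at_top_linorder)
  ultimately show ?thesis by (intro exI[of _ "max t0 0"]) (auto simp: less_imp_le)
qed

lemma (in finite_measure) deriv_cdf_antimono:
  assumes "(\<lambda>\<omega>. D \<omega> x) \<in> borel_measurable M" and "AE \<omega> in M. D \<omega> x \<le> D \<omega> y"
  shows "deriv_cdf M D y t \<le> deriv_cdf M D x t"
  unfolding deriv_cdf_def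
  using assms by (intro finite_measure_mono_AE) (auto elim!: eventually_mono)

lemma (in prob_space) deriv_cdf_mono_of_concave:
  assumes valuations: "AE \<omega> in M. concave_on {a..b} (V \<omega>) \<and>
          (\<forall>x\<in>{a..b}. (V \<omega> has_real_derivative V' \<omega> x) (at x within {a..b}))"
    and meas: "(\<lambda>\<omega>. V' \<omega> y) \<in> borel_measurable M"
    and xy: "x \<in> {a..b}" "y \<in> {a..b}" "x \<le> y"
  shows "deriv_cdf M V' x t \<le> deriv_cdf M V' y t"
proof -
  have "AE \<omega> in M. V' \<omega> y \<le> V' \<omega> x"
    using valuations
  proof eventually_elim
    case (elim \<omega>)
    then have concave: "concave_on {a..b} (V \<omega>)"
      and deriv: "\<And>z. z \<in> {a..b} \<Longrightarrow> (V \<omega> has_real_derivative V' \<omega> z) (at z within {a..b})"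
      by auto
    show ?case
    proof (cases "x = y")
      case False
      with xy have "x < y" by simp
      with xy show ?thesis by (intro concave_on_Icc_deriv_antimono[OF concave _ _ _ deriv deriv])
    qed simp
  qed
  with meas show ?thesis by (rule deriv_cdf_antimono)
qed

theorem mainTheorem11:
  fixes M :: "'a measure" and V V' :: "'a \<Rightarrow> real \<Rightarrow> real"
    and \<kappa> :: real and q :: "real \<Rightarrow> real"
  assumes kappa: "\<kappa> \<ge> 1"
    and prob: "prob_space M"
    and valuations: "AE \<omega> in M.
          (\<forall>x\<in>{0..1}. 0 \<le> V \<omega> x) \<and> mono_on {0..1} (V \<omega>) \<and> concave_on {0..1} (V \<omega>) \<and>
          (\<forall>x\<in>{0..1}. (V \<omega> has_real_derivative V' \<omega> x) (at x within {0..1}))"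
    and deriv_rv: "\<forall>x\<in>{0..1}. (\<lambda>\<omega>. V' \<omega> x) \<in> borel_measurable M"
    and regular: "concave_on {0..1} (\<lambda>s. qtimes s (deriv_cdf M V' 0))"
    and q_meas: "q \<in> borel_measurable (restrict_space lebesgue {0..1})"
    and q_range: "\<forall>x\<in>{0..1}. 0 \<le> q x \<and> q x \<le> 1"
  shows "let r = (LINT x:{0..1}|lebesgue. q x);
             H = (\<lambda>t. deriv_cdf M V' 0 (2 * \<kappa> * t))
         in (\<integral>\<^sup>+ x \<in> {0..1}. ennreal (qtimes (q x) (deriv_cdf M V' x)) \<partial>lebesgue)
              \<le> ennreal (qtimes r (deriv_cdf M V' 0))
            \<and> qtimes r (deriv_cdf M V' 0) = 2 * \<kappa> * qtimes r H"
proof -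
  interpret M: prob_space M by (rule prob)
  define F where "F x = deriv_cdf M V' x" for x
  define N where "N = restrict_space lebesgue {0..1::real}"
  define r where "r = (LINT x:{0..1}|lebesgue. q x)"
  interpret N: prob_space N
    by (rule prob_spaceI) (simp add: N_def space_restrict_space emeasure_restrict_space)
  have space_N: "space N = {0..1}" by (simp add: N_def space_restrict_space)
  have q_int: "integrable N q"
    using q_meas q_range by (intro N.integrable_const_bound[where B=1]) (auto simp: N_def space_N)
  have r_eq: "r = N.expectation q"
    unfolding r_def N_def set_lebesgue_integral_def by (subst integral_restrict_space) auto
  have F_exceeds: "\<forall>u<1. \<exists>t\<ge>0. u \<le> F x t" if "x \<in> {0..1}" for x
    using M.deriv_cdf_exceeds_below_one deriv_rv that by (auto simp: F_def)
  have concave_valuations: "AE \<omega> in M. concave_on {0..1} (V \<omega>) \<and>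
      (\<forall>x\<in>{0..1}. (V \<omega> has_real_derivative V' \<omega> x) (at x within {0..1}))"
    using valuations by eventually_elim blast
  have F0_le: "F 0 t \<le> F x t" if "x \<in> {0..1}" for x t
    unfolding F_def using concave_valuations deriv_rv that
    by (intro M.deriv_cdf_mono_of_concave[where a=0 and b=1]) auto
  have r_nonneg: "0 \<le> r"
    unfolding r_eq using q_int q_range by (intro N.integral_ge_const) (auto simp: space_N)
  have "(\<integral>\<^sup>+ x \<in> {0..1}. ennreal (qtimes (q x) (F x)) \<partial>lebesgue) = (\<integral>\<^sup>+ x. ennreal (qtimes (q x) (F x)) \<partial>N)"
    unfolding N_def by (subst nn_integral_restrict_space) auto
  also have "\<dots> \<le> (\<integral>\<^sup>+ x. ennreal (qtimes (q x) (F 0)) \<partial>N)"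
    using q_range F_exceeds F0_le
    by (intro nn_integral_mono ennreal_leI qtimes_antimono_cdf) (auto simp: space_N)
  also have "\<dots> \<le> ennreal (qtimes r (F 0))"
    unfolding r_eq using regular q_int q_range F_exceeds[of 0]
    by (intro N.jensens_inequality_concave_Icc[where a=0 and b=1] qtimes_nonneg) (auto simp: F_def space_N)
  moreover have "qtimes r (F 0) = 2 * \<kappa> * qtimes r (\<lambda>t. F 0 (2 * \<kappa> * t))"
    using F_exceeds[of 0] kappa r_nonneg by (intro qtimes_rescale) auto
  ultimately show ?thesis by (simp add: Let_def F_def r_def)
qed

end
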